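(* The classes PosLimSup and AsLimSup are closed under sum: for any two automata $A_1,A_2$ in PosLimSup (resp. AsLimSup) over the same alphabet $\Sigma$, there is an automaton $A$ in PosLimSup (resp. AsLimSup) over $\Sigma$ with $L_A(w)=L_{A_1}(w)+L_{A_2}(w)$ for all $w\in\Sigma^\omega$.
   Context: A probabilistic weighted automaton over a finite alphabet $\Sigma$ is a tuple $A=(Q,\rho_I,\Sigma,\delta,\gamma)$ where $Q$ is a finite set of states, $\rho_I$ is a probability distribution on $Q$, $\delta:Q\times\Sigma\to\mathcal D(Q)$ assigns to each state and letter a probability distribution on $Q$, and $\gamma:Q\times\Sigma\times Q\to\mathbb Q$ is a weight function. A run over an infinite word $w=\sigma_1\sigma_2\dots$ is a sequence $r=q_0\sigma_1q_1\sigma_2\dots$ with $\rho_I(q_0)>0$ and $\delta(q_i,\sigma_{i+1})(q_{i+1})>0$ for all $i$; its weight sequence is $\gamma(r)=v_0v_1\dots$ with $v_i=\gamma(q_i,\sigma_{i+1},q_{i+1})$. For each $w$, the probabilities of finite run prefixes induce a probability measure $\mathbb P^A$ on runs over $w$. With $\mathsf{LimSup}(v)=\limsup_n v_n$, PosLimSup automata define $L^{>0}_A(w)=\sup\{\eta\mid \mathbb P^A(\{r:\mathsf{LimSup}(\gamma(r))\ge\eta\})>0\}$ and AsLimSup automata define $L^{=1}_A(w)=\sup\{\eta\mid \mathbb P^A(\{r:\mathsf{LimSup}(\gamma(r))\ge\eta\})=1\}$. *)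

theory Defs
  imports "HOL-Probability.Probability"
begin

text \<open>Probabilistic weighted automata over a finite alphabet (the type 'a, with Sigma = UNIV).
  States are natural numbers; the state set is an explicit finite set of naturals.\<close>

record 'a pwa =
  states :: "nat set"
  init   :: "nat pmf"
  trans  :: "nat \<Rightarrow> 'a \<Rightarrow> nat pmf"
  weight :: "nat \<Rightarrow> 'a \<Rightarrow> nat \<Rightarrow> rat"

definition wf_pwa :: "('a::finite) pwa \<Rightarrow> bool" where
  "wf_pwa A \<longleftrightarrow> finite (states A) \<and> set_pmf (init A) \<subseteq> states A \<and>
     (\<forall>q\<in>states A. \<forall>\<sigma>. set_pmf (trans A q \<sigma>) \<subseteq> states A)"

definition seq_space :: "(nat \<Rightarrow> nat) measure" where
  "seq_space = PiM UNIV (\<lambda>_. count_space UNIV)"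

text \<open>Probability of the finite prefix q_0 sigma_1 q_1 ... sigma_n q_n over the word w
  (with w i = sigma_(i+1)).\<close>
definition prefix_prob :: "('a::finite) pwa \<Rightarrow> (nat \<Rightarrow> 'a) \<Rightarrow> nat \<Rightarrow> (nat \<Rightarrow> nat) \<Rightarrow> real" where
  "prefix_prob A w n p = pmf (init A) (p 0) * (\<Prod>i<n. pmf (trans A (p i) (w i)) (p (Suc i)))"

definition run_measure :: "('a::finite) pwa \<Rightarrow> (nat \<Rightarrow> 'a) \<Rightarrow> (nat \<Rightarrow> nat) measure" where
  "run_measure A w = (THE M. prob_space M \<and> sets M = sets seq_space \<and>
     (\<forall>n p. emeasure M {r \<in> space seq_space. \<forall>i\<le>n. r i = p i} = ennreal (prefix_prob A w n p)))"

text \<open>Weight sequence gamma(r) = v_0 v_1 ... with v_i = gamma(q_i, sigma_(i+1), q_(i+1)).\<close>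
definition wseq :: "('a::finite) pwa \<Rightarrow> (nat \<Rightarrow> 'a) \<Rightarrow> (nat \<Rightarrow> nat) \<Rightarrow> nat \<Rightarrow> real" where
  "wseq A w r i = of_rat (weight A (r i) (w i) (r (Suc i)))"

definition LimSup :: "(nat \<Rightarrow> real) \<Rightarrow> ereal" where
  "LimSup v = limsup (\<lambda>n. ereal (v n))"

definition ev_ge :: "('a::finite) pwa \<Rightarrow> (nat \<Rightarrow> 'a) \<Rightarrow> real \<Rightarrow> (nat \<Rightarrow> nat) set" where
  "ev_ge A w \<eta> = {r \<in> space seq_space. LimSup (wseq A w r) \<ge> ereal \<eta>}"

definition L_pos :: "('a::finite) pwa \<Rightarrow> (nat \<Rightarrow> 'a) \<Rightarrow> real" where
  "L_pos A w = Sup {\<eta>. measure (run_measure A w) (ev_ge A w \<eta>) > 0}"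

definition L_as :: "('a::finite) pwa \<Rightarrow> (nat \<Rightarrow> 'a) \<Rightarrow> real" where
  "L_as A w = Sup {\<eta>. measure (run_measure A w) (ev_ge A w \<eta>) = 1}"

end

theory Submission
  imports Defs
begin

text \<open>The sum automaton runs A1 and A2 in parallel and keeps, for every pair (x, y) of weights
  of A1 and A2, a monitor that records whether A1 has produced a weight \<open>\<ge> x\<close> and A2 a weight
  \<open>\<ge> y\<close> since the monitor last fired; once both have happened it fires and resets. Each transition
  is weighted by the largest x + y among the firing monitors. Weights take finitely many values,
  so along a run the limsup la of A1 is attained infinitely often and eventually never exceeded,
  and likewise lb for A2. Hence the monitor of (la, lb) fires infinitely often, while any monitor of
  a pair exceeding (la, lb) in a component fires only finitely often: the limsup of the sum is
  la + lb. Runs of the sum automaton are distributed like pairs of independent runs of A1 and A2,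
  so its limsup is the sum of two independent random variables with finite supports. The largest
  threshold reached with positive probability (resp. almost surely) is the maximum (resp. minimum)
  of the support, and the support of the sum is the sumset of the supports.\<close>

section \<open>Monitoring pairs of weights\<close>

definition monitor_fires :: "'b::linorder \<times> 'b \<Rightarrow> 'b \<Rightarrow> 'b \<Rightarrow> bool \<times> bool \<Rightarrow> bool" where
  "monitor_fires t a b f \<longleftrightarrow> (fst f \<or> fst t \<le> a) \<and> (snd f \<or> snd t \<le> b)"

definition monitor_step :: "'b::linorder \<times> 'b \<Rightarrow> 'b \<Rightarrow> 'b \<Rightarrow> bool \<times> bool \<Rightarrow> bool \<times> bool" where
  "monitor_step t a b f =
     (if monitor_fires t a b f then (False, False) else (fst f \<or> fst t \<le> a, snd f \<or> snd t \<le> b))"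

lemma monitor_fires_swap:
  "monitor_fires (prod.swap t) b a (prod.swap f) \<longleftrightarrow> monitor_fires t a b f"
  by (auto simp: monitor_fires_def)

lemma monitor_step_swap:
  "monitor_step (prod.swap t) b a (prod.swap f) = prod.swap (monitor_step t a b f)"
  by (auto simp: monitor_step_def monitor_fires_def)

lemma monitor_eventually_silent_fst:
  fixes a b :: "nat \<Rightarrow> 'b::linorder"
  assumes f: "\<And>n. f (Suc n) = monitor_step t (a n) (b n) (f n)"
    and ev: "eventually (\<lambda>n. a n \<le> l) sequentially" and l: "l < fst t"
  shows "eventually (\<lambda>n. \<not> monitor_fires t (a n) (b n) (f n)) sequentially"
proof -
  obtain N where "\<And>n. n \<ge> N \<Longrightarrow> a n \<le> l" using ev by (auto simp: eventually_sequentially)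
  then have N: "\<And>n. n \<ge> N \<Longrightarrow> \<not> fst t \<le> a n" using l by (meson le_less_trans not_le)
  show ?thesis
  proof (cases "\<exists>m\<ge>N. monitor_fires t (a m) (b m) (f m)")
    case False
    then show ?thesis by (auto simp: eventually_sequentially)
  next
    case True
    then obtain m where m: "m \<ge> N" "monitor_fires t (a m) (b m) (f m)" by auto
    \<comment> \<open>after the reset at step m the first flag can never be raised again\<close>
    have "\<not> fst (f n)" if "n \<ge> Suc m" for n
      using that
    proof (induction n rule: dec_induct)
      case base
      then show ?case using m f[of m] by (simp add: monitor_step_def)
    next
      case (step n)
      then show ?case using f[of n] N[of n] m(1) by (simp add: monitor_step_def)
    qed
    then have "\<forall>n\<ge>Suc m. \<not> monitor_fires t (a n) (b n) (f n)"
      using N m(1) by (auto simp: monitor_fires_def)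
    then show ?thesis by (auto simp: eventually_sequentially)
  qed
qed

lemma monitor_eventually_silent_snd:
  fixes a b :: "nat \<Rightarrow> 'b::linorder"
  assumes f: "\<And>n. f (Suc n) = monitor_step t (a n) (b n) (f n)"
    and ev: "eventually (\<lambda>n. b n \<le> l) sequentially" and l: "l < snd t"
  shows "eventually (\<lambda>n. \<not> monitor_fires t (a n) (b n) (f n)) sequentially"
proof -
  have "\<And>n. prod.swap (f (Suc n)) = monitor_step (prod.swap t) (b n) (a n) (prod.swap (f n))"
    by (simp add: f monitor_step_swap)
  from monitor_eventually_silent_fst[OF this ev] l show ?thesis
    by (simp add: monitor_fires_swap)
qed

lemma monitor_fires_frequently:
  fixes a b :: "nat \<Rightarrow> 'b::linorder"
  assumes f: "\<And>n. f (Suc n) = monitor_step t (a n) (b n) (f n)"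
    and fa: "frequently (\<lambda>n. fst t \<le> a n) sequentially"
    and fb: "frequently (\<lambda>n. snd t \<le> b n) sequentially"
  shows "frequently (\<lambda>n. monitor_fires t (a n) (b n) (f n)) sequentially"
  unfolding frequently_sequentially
proof (rule allI, rule ccontr)
  fix N assume "\<not> (\<exists>n\<ge>N. monitor_fires t (a n) (b n) (f n))"
  then have silent: "\<And>n. n \<ge> N \<Longrightarrow> \<not> monitor_fires t (a n) (b n) (f n)" by auto
  obtain n1 where n1: "n1 \<ge> N" "fst t \<le> a n1" using fa by (auto simp: frequently_sequentially)
  have raised: "fst (f n)" if "n \<ge> Suc n1" for n
    using that
  proof (induction n rule: dec_induct)
    case base
    then show ?case using n1 silent[of n1] f[of n1] by (simp add: monitor_step_def)
  next
    case (step n)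
    then show ?case using silent[of n] f[of n] n1 by (simp add: monitor_step_def)
  qed
  obtain n2 where n2: "n2 \<ge> Suc n1" "snd t \<le> b n2" using fb by (auto simp: frequently_sequentially)
  show False
    using raised[OF n2(1)] n2 n1 silent[of n2] by (simp add: monitor_fires_def)
qed

definition memory_step :: "('b::linordered_ab_semigroup_add \<times> 'b) list \<Rightarrow> 'b \<Rightarrow>
    (bool \<times> bool) list \<times> 'b \<Rightarrow> 'b \<Rightarrow> 'b \<Rightarrow> (bool \<times> bool) list \<times> 'b" where
  "memory_step ts m0 s a b =
     (map (\<lambda>k. monitor_step (ts ! k) a b (fst s ! k)) [0..<length ts],
      Max (insert m0 ((\<lambda>k. fst (ts ! k) + snd (ts ! k)) `
        {k. k < length ts \<and> monitor_fires (ts ! k) a b (fst s ! k)})))"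

lemma memory_output_limsup:
  fixes a b :: "nat \<Rightarrow> 'b::linordered_ab_semigroup_add"
  assumes S: "\<And>n. S (Suc n) = memory_step ts m0 (S n) (a n) (b n)"
    and ea: "eventually (\<lambda>n. a n \<le> la) sequentially" and fa: "frequently (\<lambda>n. la \<le> a n) sequentially"
    and eb: "eventually (\<lambda>n. b n \<le> lb) sequentially" and fb: "frequently (\<lambda>n. lb \<le> b n) sequentially"
    and mem: "(la, lb) \<in> set ts" and m0: "m0 \<le> la + lb"
  shows "eventually (\<lambda>n. snd (S (Suc n)) \<le> la + lb) sequentially"
    and "frequently (\<lambda>n. la + lb \<le> snd (S (Suc n))) sequentially"
proof -
  define f where "f k n = fst (S n) ! k" for k n
  have f: "f k (Suc n) = monitor_step (ts ! k) (a n) (b n) (f k n)" if "k < length ts" for k n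
    using that by (simp add: f_def S memory_step_def)
  have out_eq: "snd (S (Suc n)) = Max (insert m0 ((\<lambda>k. fst (ts ! k) + snd (ts ! k)) `
      {k. k < length ts \<and> monitor_fires (ts ! k) (a n) (b n) (f k n)}))" for n
    by (simp add: S memory_step_def f_def)
  have "eventually (\<lambda>n. \<not> monitor_fires (ts ! k) (a n) (b n) (f k n)) sequentially"
    if k: "k < length ts" and exceeds: "\<not> (fst (ts ! k) \<le> la \<and> snd (ts ! k) \<le> lb)" for k
  proof (cases "la < fst (ts ! k)")
    case True
    from monitor_eventually_silent_fst[where f="f k", OF f[OF k] ea True] show ?thesis .
  next
    case False
    then have "lb < snd (ts ! k)" using exceeds by auto
    from monitor_eventually_silent_snd[where f="f k", OF f[OF k] eb this] show ?thesis .
  qed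
  then have "eventually (\<lambda>n. \<forall>k\<in>{k. k < length ts \<and> \<not> (fst (ts ! k) \<le> la \<and> snd (ts ! k) \<le> lb)}.
      \<not> monitor_fires (ts ! k) (a n) (b n) (f k n)) sequentially"
    by (intro eventually_ball_finite) auto
  then show "eventually (\<lambda>n. snd (S (Suc n)) \<le> la + lb) sequentially"
    by (rule eventually_mono) (use m0 in \<open>auto simp: out_eq intro: add_mono\<close>)
  obtain k where k: "k < length ts" "ts ! k = (la, lb)" using mem by (auto simp: in_set_conv_nth)
  have "frequently (\<lambda>n. monitor_fires (ts ! k) (a n) (b n) (f k n)) sequentially"
    by (rule monitor_fires_frequently[where f="f k", OF f[OF k(1)]]) (use k fa fb in auto)
  then show "frequently (\<lambda>n. la + lb \<le> snd (S (Suc n))) sequentially"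
    by (rule frequently_elim1) (use k in \<open>force simp: out_eq intro: Max_ge\<close>)
qed

lemma finite_range_limsup_attained:
  fixes a :: "nat \<Rightarrow> 'b::linorder"
  assumes V: "finite V" and a: "\<And>n. a n \<in> V"
  shows "\<exists>l\<in>V. eventually (\<lambda>n. a n \<le> l) sequentially \<and> frequently (\<lambda>n. a n = l) sequentially"
proof -
  define T where "T = {x\<in>V. frequently (\<lambda>n. a n = x) sequentially}"
  have rare: "eventually (\<lambda>n. a n \<noteq> x) sequentially" if "x \<notin> T" "x \<in> V" for x
    using that by (simp add: T_def not_frequently)
  have "T \<noteq> {}"
  proof
    assume "T = {}"
    then have "eventually (\<lambda>n. \<forall>x\<in>V. a n \<noteq> x) sequentially"
      using V rare by (intro eventually_ball_finite) auto
    then show False using a by (auto simp: eventually_sequentially)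
  qed
  moreover have "finite T" using V by (simp add: T_def)
  ultimately have lT: "Max T \<in> T" by simp
  have "x \<notin> T" if "Max T < x" for x
    using that Max_ge[OF \<open>finite T\<close>, of x] by auto
  then have "eventually (\<lambda>n. \<forall>x\<in>{x\<in>V. Max T < x}. a n \<noteq> x) sequentially"
    using V rare by (intro eventually_ball_finite) auto
  then have "eventually (\<lambda>n. a n \<le> Max T) sequentially"
    by (rule eventually_mono) (use a in \<open>force simp: not_le\<close>)
  then show ?thesis using lT by (auto simp: T_def)
qed

lemma LimSup_eqI:
  fixes v :: "nat \<Rightarrow> real"
  assumes "eventually (\<lambda>n. v n \<le> c) sequentially" and "frequently (\<lambda>n. c \<le> v n) sequentially"
  shows "LimSup v = ereal c"
proof (rule antisym)
  show "LimSup v \<le> ereal c" unfolding LimSup_def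
    by (rule Limsup_bounded) (use assms(1) in \<open>auto elim: eventually_mono\<close>)
  show "ereal c \<le> LimSup v" unfolding LimSup_def limsup_INF_SUP
  proof (rule INF_greatest)
    fix N :: nat
    obtain n where "n \<ge> N" "c \<le> v n" using assms(2) by (auto simp: frequently_sequentially)
    then show "ereal c \<le> (SUP m\<in>{N..}. ereal (v m))" by (intro SUP_upper2[of n]) auto
  qed
qed

section \<open>The run measure\<close>

abbreviation cylinder :: "nat \<Rightarrow> (nat \<Rightarrow> nat) \<Rightarrow> (nat \<Rightarrow> nat) set" where
  "cylinder n p \<equiv> {r \<in> space seq_space. \<forall>i\<le>n. r i = p i}"

definition has_prefix_probs :: "(nat \<Rightarrow> nat) measure \<Rightarrow> ('a::finite) pwa \<Rightarrow> (nat \<Rightarrow> 'a) \<Rightarrow> bool" where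
  "has_prefix_probs M B w \<longleftrightarrow> (\<forall>n p. emeasure M (cylinder n p) = ennreal (prefix_prob B w n p))"

lemma space_seq_space [simp]: "space seq_space = UNIV"
  by (simp add: seq_space_def space_PiM)

lemma sets_cylinder: "cylinder n p \<in> sets seq_space"
  unfolding seq_space_def by measurable

lemma measurable_seq_space_coord: "(\<lambda>r. r i) \<in> measurable seq_space (count_space UNIV)"
  unfolding seq_space_def by measurable

lemma prefix_prob_nonneg: "0 \<le> prefix_prob B w n p"
  by (simp add: prefix_prob_def prod_nonneg)

lemma prefix_prob_0: "prefix_prob B w 0 p = pmf (init B) (p 0)"
  by (simp add: prefix_prob_def)

lemma prefix_prob_Suc:
  "prefix_prob B w (Suc n) p = prefix_prob B w n p * pmf (trans B (p n) (w n)) (p (Suc n))"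
  by (simp add: prefix_prob_def)

lemma prod_emb_seq_space:
  "prod_emb UNIV (\<lambda>_. count_space UNIV) J (Pi\<^sub>E J A) = {r :: nat \<Rightarrow> nat. \<forall>j\<in>J. r j \<in> A j}"
  by (auto simp: prod_emb_def restrict_PiE_iff)

lemma prod_emb_eq_UN_cylinders:
  fixes A :: "nat \<Rightarrow> nat set"
  assumes J: "J \<subseteq> {..n}"
  shows "prod_emb UNIV (\<lambda>_. count_space UNIV) J (Pi\<^sub>E J A)
       = (\<Union>p\<in>Pi\<^sub>E {..n} (\<lambda>i. if i \<in> J then A i else UNIV). cylinder n p)"
  unfolding prod_emb_seq_space
proof (intro equalityI subsetI)
  fix r assume "r \<in> {r. \<forall>j\<in>J. r j \<in> A j}"
  then have "restrict r {..n} \<in> Pi\<^sub>E {..n} (\<lambda>i. if i \<in> J then A i else UNIV)"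
    by (auto simp: restrict_PiE_iff)
  moreover have "r \<in> cylinder n (restrict r {..n})" by simp
  ultimately show "r \<in> (\<Union>p\<in>Pi\<^sub>E {..n} (\<lambda>i. if i \<in> J then A i else UNIV). cylinder n p)"
    by blast
next
  fix r assume "r \<in> (\<Union>p\<in>Pi\<^sub>E {..n} (\<lambda>i. if i \<in> J then A i else UNIV). cylinder n p)"
  then obtain p where p: "p \<in> Pi\<^sub>E {..n} (\<lambda>i. if i \<in> J then A i else UNIV)" "\<forall>i\<le>n. r i = p i"
    by blast
  have "r j \<in> A j" if "j \<in> J" for j
  proof -
    have "j \<le> n" using that J by auto
    then show ?thesis using that p(2) PiE_mem[OF p(1), of j] by simp
  qed
  then show "r \<in> {r. \<forall>j\<in>J. r j \<in> A j}" by simp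
qed

lemma emeasure_prod_emb_eq_sum_cylinders:
  fixes A :: "nat \<Rightarrow> nat set"
  assumes sets_M: "sets M = sets seq_space" and J: "J \<subseteq> {..n}"
  shows "emeasure M (prod_emb UNIV (\<lambda>_. count_space UNIV) J (Pi\<^sub>E J A))
     = (\<integral>\<^sup>+p. emeasure M (cylinder n p) \<partial>count_space (Pi\<^sub>E {..n} (\<lambda>i. if i \<in> J then A i else UNIV)))"
  unfolding prod_emb_eq_UN_cylinders[OF J]
proof (rule emeasure_UN_countable)
  show "countable (Pi\<^sub>E {..n} (\<lambda>i. if i \<in> J then A i else UNIV))"
    by (rule countable_PiE) auto
  show "disjoint_family_on (cylinder n) (Pi\<^sub>E {..n} (\<lambda>i. if i \<in> J then A i else UNIV))"
    unfolding disjoint_family_on_def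
  proof (intro ballI impI)
    fix p q assume pq: "p \<in> Pi\<^sub>E {..n} (\<lambda>i. if i \<in> J then A i else UNIV)"
      "q \<in> Pi\<^sub>E {..n} (\<lambda>i. if i \<in> J then A i else UNIV)" "p \<noteq> q"
    have "\<exists>i\<le>n. p i \<noteq> q i"
    proof (rule ccontr)
      assume "\<not> (\<exists>i\<le>n. p i \<noteq> q i)"
      then have "p = q" using pq(1,2) by (intro PiE_ext) auto
      then show False using pq(3) by simp
    qed
    then show "cylinder n p \<inter> cylinder n q = {}" by auto
  qed
  show "\<And>p. cylinder n p \<in> sets M"
    unfolding sets_M by (rule sets_cylinder)
qed

lemma prefix_probs_unique:
  assumes "prob_space M" "sets M = sets seq_space" "has_prefix_probs M B w"
    and "sets N = sets seq_space" "has_prefix_probs N B w"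
  shows "M = N"
proof (rule measure_eqI_PiM_infinite[where I=UNIV and M="\<lambda>_. count_space UNIV"])
  show "sets M = sets (PiM UNIV (\<lambda>_. count_space UNIV))" "sets N = sets (PiM UNIV (\<lambda>_. count_space UNIV))"
    using assms by (simp_all add: seq_space_def)
  show "finite_measure M" using assms(1) by (rule prob_space.finite_measure)
  fix A :: "nat \<Rightarrow> nat set" and J :: "nat set" assume "finite J"
  then have "J \<subseteq> {..Max (insert 0 J)}" by auto
  from this assms show "emeasure M (prod_emb UNIV (\<lambda>_. count_space UNIV) J (Pi\<^sub>E J A))
      = emeasure N (prod_emb UNIV (\<lambda>_. count_space UNIV) J (Pi\<^sub>E J A))"
    by (simp add: emeasure_prod_emb_eq_sum_cylinders has_prefix_probs_def)
qed

lemma run_measure_eqI: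
  assumes "prob_space M" "sets M = sets seq_space" "has_prefix_probs M B w"
  shows "run_measure B w = M"
  unfolding run_measure_def
proof (rule the_equality)
  show "prob_space M \<and> sets M = sets seq_space \<and>
      (\<forall>n p. emeasure M (cylinder n p) = ennreal (prefix_prob B w n p))"
    using assms by (simp add: has_prefix_probs_def)
  fix N assume "prob_space N \<and> sets N = sets seq_space \<and>
      (\<forall>n p. emeasure N (cylinder n p) = ennreal (prefix_prob B w n p))"
  then show "N = M"
    using assms by (intro prefix_probs_unique[of N B w]) (auto simp: has_prefix_probs_def)
qed

text \<open>Runs are realised on a product of independent choices: a successor is drawn in advance for
  every step i and every state q, and the run follows the choices made at the states it visits.
  Runs of the sum automaton then come from pairs of independent choice families.\<close>

definition choice_pmf :: "('a::finite) pwa \<Rightarrow> (nat \<Rightarrow> 'a) \<Rightarrow> nat \<times> nat \<Rightarrow> nat pmf" where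
  "choice_pmf B w iq = (case iq of (0, q) \<Rightarrow> init B | (Suc i, q) \<Rightarrow> trans B q (w i))"

definition choice_space :: "('a::finite) pwa \<Rightarrow> (nat \<Rightarrow> 'a) \<Rightarrow> (nat \<times> nat \<Rightarrow> nat) measure" where
  "choice_space B w = PiM UNIV (\<lambda>iq. measure_pmf (choice_pmf B w iq))"

fun follow_choices :: "(nat \<times> nat \<Rightarrow> nat) \<Rightarrow> nat \<Rightarrow> nat" where
  "follow_choices \<omega> 0 = \<omega> (0, 0)"
| "follow_choices \<omega> (Suc i) = \<omega> (Suc i, follow_choices \<omega> i)"

lemma space_choice_space [simp]: "space (choice_space B w) = UNIV"
  by (simp add: choice_space_def space_PiM)

lemma prob_space_choice_space: "prob_space (choice_space B w)"
  unfolding choice_space_def by (simp add: prob_space_PiM prob_space_measure_pmf)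

lemma measurable_follow_choices_at:
  "(\<lambda>\<omega>. follow_choices \<omega> i) \<in> measurable (choice_space B w) (count_space UNIV)"
proof (induction i)
  case 0
  show ?case unfolding choice_space_def follow_choices.simps by measurable
next
  case (Suc i)
  have "(\<lambda>\<omega>. \<omega> (Suc i, q)) \<in> measurable (choice_space B w) (count_space UNIV)" for q
    unfolding choice_space_def by measurable
  from measurable_compose_countable[OF this Suc] show ?case by simp
qed

lemma measurable_follow_choices: "follow_choices \<in> measurable (choice_space B w) seq_space"
  unfolding seq_space_def by (rule measurable_PiM_single') (simp_all add: measurable_follow_choices_at)

lemma follow_choices_in_cylinder_iff:
  "(\<forall>i\<le>n. follow_choices \<omega> i = p i) \<longleftrightarrow>
     (\<forall>j\<in>insert (0,0) ((\<lambda>i. (Suc i, p i)) ` {..<n}). \<omega> j \<in> {p (fst j)})"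
  by (induction n) (auto simp: le_Suc_eq lessThan_Suc)

lemma emeasure_follow_choices_cylinder:
  "emeasure (choice_space B w) {\<omega>. \<forall>i\<le>n. follow_choices \<omega> i = p i} = ennreal (prefix_prob B w n p)"
proof -
  interpret product_prob_space "\<lambda>iq. measure_pmf (choice_pmf B w iq)" UNIV
    by unfold_locales
  let ?J = "insert (0,0) ((\<lambda>i. (Suc i, p i)) ` {..<n})"
  have "emeasure (choice_space B w) {\<omega>. \<forall>i\<le>n. follow_choices \<omega> i = p i}
      = emeasure (choice_space B w) {\<omega> \<in> space (choice_space B w). \<forall>j\<in>?J. \<omega> j \<in> {p (fst j)}}"
    by (simp add: follow_choices_in_cylinder_iff)
  also have "\<dots> = (\<Prod>j\<in>?J. ennreal (pmf (choice_pmf B w j) (p (fst j))))"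
    unfolding choice_space_def by (subst emeasure_PiM_Collect) (auto simp: emeasure_pmf_single)
  also have "\<dots> = ennreal (pmf (init B) (p 0)) * (\<Prod>i<n. ennreal (pmf (trans B (p i) (w i)) (p (Suc i))))"
    by (subst prod.insert) (auto simp: prod.reindex inj_on_def choice_pmf_def)
  finally show ?thesis
    by (simp add: prefix_prob_def prod_ennreal ennreal_mult' prod_nonneg)
qed

lemma sets_follow_choices_cylinder:
  "{\<omega>. \<forall>i\<le>n. follow_choices \<omega> i = p i} \<in> sets (choice_space B w)"
  using measurable_sets[OF measurable_follow_choices sets_cylinder] by (simp add: vimage_def)

lemma run_measure_eq_distr_follow_choices:
  "run_measure B w = distr (choice_space B w) seq_space follow_choices"
proof (rule run_measure_eqI)
  show "prob_space (distr (choice_space B w) seq_space follow_choices)"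
    by (rule prob_space.prob_space_distr[OF prob_space_choice_space measurable_follow_choices])
  show "has_prefix_probs (distr (choice_space B w) seq_space follow_choices) B w"
    unfolding has_prefix_probs_def emeasure_distr[OF measurable_follow_choices sets_cylinder]
    by (simp add: emeasure_follow_choices_cylinder[symmetric] vimage_def)
qed simp

section \<open>The sum automaton\<close>

definition weight_values :: "('a::finite) pwa \<Rightarrow> rat set" where
  "weight_values B = (\<lambda>(q, \<sigma>, q'). weight B q \<sigma> q') ` (states B \<times> UNIV \<times> states B)"

definition weight_pairs :: "('a::finite) pwa \<Rightarrow> 'a pwa \<Rightarrow> (rat \<times> rat) list" where
  "weight_pairs A1 A2 = (SOME ts. set ts = weight_values A1 \<times> weight_values A2)"

definition min_weight_sum :: "('a::finite) pwa \<Rightarrow> 'a pwa \<Rightarrow> rat" where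
  "min_weight_sum A1 A2 = Min (weight_values A1) + Min (weight_values A2)"

type_synonym memory = "(bool \<times> bool) list \<times> rat"

definition initial_memory :: "('a::finite) pwa \<Rightarrow> 'a pwa \<Rightarrow> memory" where
  "initial_memory A1 A2 = (replicate (length (weight_pairs A1 A2)) (False, False), min_weight_sum A1 A2)"

definition memories :: "('a::finite) pwa \<Rightarrow> 'a pwa \<Rightarrow> memory set" where
  "memories A1 A2 = {fs. length fs = length (weight_pairs A1 A2)} \<times>
     insert (min_weight_sum A1 A2) ((\<lambda>(x, y). x + y) ` set (weight_pairs A1 A2))"

definition enc_state :: "nat \<times> nat \<times> memory \<Rightarrow> nat" where
  "enc_state = to_nat"

definition dec_state :: "nat \<Rightarrow> nat \<times> nat \<times> memory" where
  "dec_state = from_nat"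

lemma dec_enc_state [simp]: "dec_state (enc_state s) = s"
  by (simp add: enc_state_def dec_state_def)

lemma enc_state_eq_iff [simp]: "enc_state s = enc_state s' \<longleftrightarrow> s = s'"
  by (simp add: enc_state_def)

text \<open>States are codes of triples (q1, q2, memory); a transition is weighted by the output
  component of the memory of its target state.\<close>

definition sum_pwa :: "('a::finite) pwa \<Rightarrow> 'a pwa \<Rightarrow> 'a pwa" where
  "sum_pwa A1 A2 = \<lparr>
     states = enc_state ` (states A1 \<times> states A2 \<times> memories A1 A2),
     init = map_pmf (\<lambda>(q1, q2). enc_state (q1, q2, initial_memory A1 A2)) (pair_pmf (init A1) (init A2)),
     trans = (\<lambda>s \<sigma>. case dec_state s of (q1, q2, m) \<Rightarrow>
        map_pmf (\<lambda>(q1', q2'). enc_state (q1', q2', memory_step (weight_pairs A1 A2) (min_weight_sum A1 A2) m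
            (weight A1 q1 \<sigma> q1') (weight A2 q2 \<sigma> q2')))
          (pair_pmf (trans A1 q1 \<sigma>) (trans A2 q2 \<sigma>))),
     weight = (\<lambda>s \<sigma> s'. snd (snd (snd (dec_state s')))) \<rparr>"

fun memory_along :: "('a::finite) pwa \<Rightarrow> 'a pwa \<Rightarrow> (nat \<Rightarrow> 'a) \<Rightarrow> (nat \<Rightarrow> nat) \<Rightarrow> (nat \<Rightarrow> nat) \<Rightarrow> nat \<Rightarrow> memory" where
  "memory_along A1 A2 w r1 r2 0 = initial_memory A1 A2"
| "memory_along A1 A2 w r1 r2 (Suc i) = memory_step (weight_pairs A1 A2) (min_weight_sum A1 A2)
     (memory_along A1 A2 w r1 r2 i) (weight A1 (r1 i) (w i) (r1 (Suc i))) (weight A2 (r2 i) (w i) (r2 (Suc i)))"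

definition sum_run :: "('a::finite) pwa \<Rightarrow> 'a pwa \<Rightarrow> (nat \<Rightarrow> 'a) \<Rightarrow> (nat \<Rightarrow> nat) \<Rightarrow> (nat \<Rightarrow> nat) \<Rightarrow> nat \<Rightarrow> nat" where
  "sum_run A1 A2 w r1 r2 i = enc_state (r1 i, r2 i, memory_along A1 A2 w r1 r2 i)"

lemma memory_along_cong:
  assumes "\<forall>i\<le>n. r1 i = r1' i \<and> r2 i = r2' i" "m \<le> n"
  shows "memory_along A1 A2 w r1 r2 m = memory_along A1 A2 w r1' r2' m"
  using assms(2) by (induction m) (use assms(1) in simp_all)

definition consistent_prefix :: "('a::finite) pwa \<Rightarrow> 'a pwa \<Rightarrow> (nat \<Rightarrow> 'a) \<Rightarrow> nat \<Rightarrow> (nat \<Rightarrow> nat) \<Rightarrow> bool" where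
  "consistent_prefix A1 A2 w n p \<longleftrightarrow>
     (\<forall>i\<le>n. p i = sum_run A1 A2 w (\<lambda>i. fst (dec_state (p i))) (\<lambda>i. fst (snd (dec_state (p i)))) i)"

lemma consistent_prefix_Suc:
  "consistent_prefix A1 A2 w (Suc n) p \<longleftrightarrow> consistent_prefix A1 A2 w n p \<and>
     p (Suc n) = sum_run A1 A2 w (\<lambda>i. fst (dec_state (p i))) (\<lambda>i. fst (snd (dec_state (p i)))) (Suc n)"
  by (auto simp: consistent_prefix_def le_Suc_eq)

lemma prefix_prob_sum_pwa:
  "prefix_prob (sum_pwa A1 A2) w n p =
    (if consistent_prefix A1 A2 w n p
     then prefix_prob A1 w n (\<lambda>i. fst (dec_state (p i))) * prefix_prob A2 w n (\<lambda>i. fst (snd (dec_state (p i))))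
     else 0)"
proof (induction n)
  case 0
  let ?f = "\<lambda>(q1, q2). enc_state (q1, q2, initial_memory A1 A2)"
  have "pmf (init (sum_pwa A1 A2)) (p 0) = pmf (map_pmf ?f (pair_pmf (init A1) (init A2))) (p 0)"
    by (simp add: sum_pwa_def)
  also have "\<dots> = (if consistent_prefix A1 A2 w 0 p
      then pmf (init A1) (fst (dec_state (p 0))) * pmf (init A2) (fst (snd (dec_state (p 0)))) else 0)"
  proof (cases "consistent_prefix A1 A2 w 0 p")
    case True
    have "inj ?f" by (auto simp: inj_def)
    have "pmf (map_pmf ?f (pair_pmf (init A1) (init A2))) (?f (q1, q2)) = pmf (init A1) q1 * pmf (init A2) q2"
      for q1 q2 using pmf_map_inj'[OF \<open>inj ?f\<close>, of _ "(q1, q2)"] by (simp only: pmf_pair prod.case)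
    moreover have "?f (fst (dec_state (p 0)), fst (snd (dec_state (p 0)))) = p 0"
      using True by (simp add: consistent_prefix_def sum_run_def)
    ultimately show ?thesis using True by metis
  next
    case False
    then have "p 0 \<notin> ?f ` set_pmf (pair_pmf (init A1) (init A2))"
      by (auto simp: consistent_prefix_def sum_run_def)
    then show ?thesis using False by (simp add: pmf_map_outside)
  qed
  finally show ?case by (simp add: prefix_prob_0)
next
  case (Suc n)
  define p1 where "p1 = (\<lambda>i. fst (dec_state (p i)))"
  define p2 where "p2 = (\<lambda>i. fst (snd (dec_state (p i))))"
  show ?case
  proof (cases "consistent_prefix A1 A2 w n p")
    case False
    then show ?thesis using Suc.IH by (simp add: prefix_prob_Suc consistent_prefix_Suc)
  next
    case True
    then have "p n = sum_run A1 A2 w p1 p2 n"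
      by (simp add: consistent_prefix_def p1_def p2_def)
    then have "dec_state (p n) = (p1 n, p2 n, memory_along A1 A2 w p1 p2 n)"
      by (simp add: sum_run_def)
    let ?g = "\<lambda>(q1', q2'). enc_state (q1', q2', memory_step (weight_pairs A1 A2) (min_weight_sum A1 A2)
        (memory_along A1 A2 w p1 p2 n) (weight A1 (p1 n) (w n) q1') (weight A2 (p2 n) (w n) q2'))"
    let ?M = "pair_pmf (trans A1 (p1 n) (w n)) (trans A2 (p2 n) (w n))"
    have step: "trans (sum_pwa A1 A2) (p n) (w n) = map_pmf ?g ?M"
      using \<open>dec_state (p n) = _\<close> by (simp add: sum_pwa_def)
    have "inj ?g" by (auto simp: inj_def)
    have "pmf (map_pmf ?g ?M) (?g (q1, q2)) = pmf (trans A1 (p1 n) (w n)) q1 * pmf (trans A2 (p2 n) (w n)) q2"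
      for q1 q2 using pmf_map_inj'[OF \<open>inj ?g\<close>, of _ "(q1, q2)"] by (simp only: pmf_pair prod.case)
    moreover have "sum_run A1 A2 w p1 p2 (Suc n) = ?g (p1 (Suc n), p2 (Suc n))"
      by (simp add: sum_run_def)
    moreover have "p (Suc n) \<notin> ?g ` set_pmf ?M" if "p (Suc n) \<noteq> sum_run A1 A2 w p1 p2 (Suc n)"
      using that by (auto simp: sum_run_def p1_def p2_def)
    ultimately have "pmf (trans (sum_pwa A1 A2) (p n) (w n)) (p (Suc n)) =
        (if p (Suc n) = sum_run A1 A2 w p1 p2 (Suc n)
         then pmf (trans A1 (p1 n) (w n)) (p1 (Suc n)) * pmf (trans A2 (p2 n) (w n)) (p2 (Suc n)) else 0)"
      unfolding step by (auto simp: pmf_map_outside)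
    then show ?thesis
      using Suc.IH True by (simp add: prefix_prob_Suc consistent_prefix_Suc p1_def p2_def)
  qed
qed

lemma sum_run_in_cylinder_iff:
  "(\<forall>i\<le>n. sum_run A1 A2 w r1 r2 i = p i) \<longleftrightarrow> consistent_prefix A1 A2 w n p \<and>
     (\<forall>i\<le>n. r1 i = fst (dec_state (p i)) \<and> r2 i = fst (snd (dec_state (p i))))"
proof -
  let ?p1 = "\<lambda>i. fst (dec_state (p i))" and ?p2 = "\<lambda>i. fst (snd (dec_state (p i)))"
  have same_run: "(\<forall>i\<le>n. sum_run A1 A2 w r1 r2 i = p i) \<longleftrightarrow> (\<forall>i\<le>n. sum_run A1 A2 w ?p1 ?p2 i = p i)"
    if proj: "\<forall>i\<le>n. r1 i = ?p1 i \<and> r2 i = ?p2 i"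
  proof -
    have "sum_run A1 A2 w r1 r2 i = sum_run A1 A2 w ?p1 ?p2 i" if "i \<le> n" for i
      using proj that memory_along_cong[OF proj that] by (simp add: sum_run_def)
    then show ?thesis by auto
  qed
  have "\<forall>i\<le>n. r1 i = ?p1 i \<and> r2 i = ?p2 i" if "\<forall>i\<le>n. sum_run A1 A2 w r1 r2 i = p i"
    using that by (metis dec_enc_state fst_conv snd_conv sum_run_def)
  moreover have "consistent_prefix A1 A2 w n p \<longleftrightarrow> (\<forall>i\<le>n. sum_run A1 A2 w ?p1 ?p2 i = p i)"
    unfolding consistent_prefix_def by metis
  ultimately show ?thesis
    using same_run by blast
qed

lemma measurable_Pair_count_space:
  fixes f :: "'x \<Rightarrow> 'a::countable" and g :: "'x \<Rightarrow> 'b::countable"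
  assumes f: "f \<in> measurable M (count_space UNIV)" and g: "g \<in> measurable M (count_space UNIV)"
  shows "(\<lambda>x. (f x, g x)) \<in> measurable M (count_space UNIV)"
proof -
  have "(\<lambda>x. (a, g x)) \<in> measurable M (count_space UNIV)" for a
    by (rule measurable_compose[OF g]) simp
  from measurable_compose_countable[OF this f] show ?thesis .
qed

definition sum_choice_run :: "('a::finite) pwa \<Rightarrow> 'a pwa \<Rightarrow> (nat \<Rightarrow> 'a) \<Rightarrow>
    (nat \<times> nat \<Rightarrow> nat) \<times> (nat \<times> nat \<Rightarrow> nat) \<Rightarrow> nat \<Rightarrow> nat" where
  "sum_choice_run A1 A2 w \<omega> = sum_run A1 A2 w (follow_choices (fst \<omega>)) (follow_choices (snd \<omega>))"

lemma measurable_sum_choice_run: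
  "sum_choice_run A1 A2 w \<in> measurable (choice_space A1 w \<Otimes>\<^sub>M choice_space A2 w) seq_space"
proof -
  let ?M = "choice_space A1 w \<Otimes>\<^sub>M choice_space A2 w"
  have r1: "(\<lambda>\<omega>. follow_choices (fst \<omega>) i) \<in> measurable ?M (count_space UNIV)" for i
    by (rule measurable_compose[OF measurable_fst measurable_follow_choices_at])
  have r2: "(\<lambda>\<omega>. follow_choices (snd \<omega>) i) \<in> measurable ?M (count_space UNIV)" for i
    by (rule measurable_compose[OF measurable_snd measurable_follow_choices_at])
  have mem: "(\<lambda>\<omega>. memory_along A1 A2 w (follow_choices (fst \<omega>)) (follow_choices (snd \<omega>)) i)
      \<in> measurable ?M (count_space UNIV)" for i
  proof (induction i)
    case (Suc i)
    have "(\<lambda>\<omega>. ((memory_along A1 A2 w (follow_choices (fst \<omega>)) (follow_choices (snd \<omega>)) i,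
        follow_choices (fst \<omega>) i, follow_choices (snd \<omega>) i),
        follow_choices (fst \<omega>) (Suc i), follow_choices (snd \<omega>) (Suc i))) \<in> measurable ?M (count_space UNIV)"
      by (intro measurable_Pair_count_space Suc r1 r2)
    from measurable_compose[where g="\<lambda>((m, q1, q2), q1', q2').
        memory_step (weight_pairs A1 A2) (min_weight_sum A1 A2) m (weight A1 q1 (w i) q1') (weight A2 q2 (w i) q2')",
        OF this measurable_count_space]
    show ?case by (simp only: memory_along.simps prod.case)
  qed simp
  have "(\<lambda>\<omega>. sum_choice_run A1 A2 w \<omega> i) \<in> measurable ?M (count_space UNIV)" for i
    using measurable_compose[where g=enc_state,
        OF measurable_Pair_count_space[OF r1 measurable_Pair_count_space[OF r2 mem]] measurable_count_space]
    by (simp add: sum_choice_run_def sum_run_def)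
  then show ?thesis
    unfolding seq_space_def by (rule measurable_PiM_single') simp
qed

lemma has_prefix_probs_sum_pwa:
  "has_prefix_probs (distr (choice_space A1 w \<Otimes>\<^sub>M choice_space A2 w) seq_space (sum_choice_run A1 A2 w))
     (sum_pwa A1 A2) w"
  unfolding has_prefix_probs_def
proof (intro allI)
  fix n :: nat and p :: "nat \<Rightarrow> nat"
  interpret C2: prob_space "choice_space A2 w" by (rule prob_space_choice_space)
  define p1 where "p1 = (\<lambda>i. fst (dec_state (p i)))"
  define p2 where "p2 = (\<lambda>i. fst (snd (dec_state (p i))))"
  let ?C1 = "{\<omega>. \<forall>i\<le>n. follow_choices \<omega> i = p1 i}"
  let ?C2 = "{\<omega>. \<forall>i\<le>n. follow_choices \<omega> i = p2 i}"
  have preimage: "sum_choice_run A1 A2 w -` cylinder n p \<inter> space (choice_space A1 w \<Otimes>\<^sub>M choice_space A2 w)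
      = (if consistent_prefix A1 A2 w n p then ?C1 \<times> ?C2 else {})"
    by (auto simp: sum_choice_run_def sum_run_in_cylinder_iff space_pair_measure p1_def p2_def)
  have "emeasure (distr (choice_space A1 w \<Otimes>\<^sub>M choice_space A2 w) seq_space (sum_choice_run A1 A2 w)) (cylinder n p)
      = emeasure (choice_space A1 w \<Otimes>\<^sub>M choice_space A2 w) (if consistent_prefix A1 A2 w n p then ?C1 \<times> ?C2 else {})"
    unfolding emeasure_distr[OF measurable_sum_choice_run sets_cylinder] preimage ..
  also have "\<dots> = ennreal (prefix_prob (sum_pwa A1 A2) w n p)"
  proof (cases "consistent_prefix A1 A2 w n p")
    case True
    have "emeasure (choice_space A1 w \<Otimes>\<^sub>M choice_space A2 w) (?C1 \<times> ?C2)
        = emeasure (choice_space A1 w) ?C1 * emeasure (choice_space A2 w) ?C2"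
      by (intro C2.emeasure_pair_measure_Times sets_follow_choices_cylinder)
    then show ?thesis
      using True by (simp add: emeasure_follow_choices_cylinder prefix_prob_sum_pwa ennreal_mult
          prefix_prob_nonneg p1_def p2_def)
  qed (simp add: prefix_prob_sum_pwa)
  finally show "emeasure (distr (choice_space A1 w \<Otimes>\<^sub>M choice_space A2 w) seq_space (sum_choice_run A1 A2 w))
      (cylinder n p) = ennreal (prefix_prob (sum_pwa A1 A2) w n p)" .
qed

lemma run_measure_sum_pwa:
  "run_measure (sum_pwa A1 A2) w =
     distr (choice_space A1 w \<Otimes>\<^sub>M choice_space A2 w) seq_space (sum_choice_run A1 A2 w)"
  by (intro run_measure_eqI prob_space.prob_space_distr prob_space_pair prob_space_choice_space
      measurable_sum_choice_run has_prefix_probs_sum_pwa) simp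

lemma finite_weight_values: "wf_pwa B \<Longrightarrow> finite (weight_values B)"
  unfolding weight_values_def wf_pwa_def by (intro finite_imageI finite_SigmaI) auto

lemma weight_in_weight_values:
  "q \<in> states B \<Longrightarrow> q' \<in> states B \<Longrightarrow> weight B q \<sigma> q' \<in> weight_values B"
  unfolding weight_values_def by (rule image_eqI[where x="(q, \<sigma>, q')"]) auto

lemma set_weight_pairs:
  "wf_pwa A1 \<Longrightarrow> wf_pwa A2 \<Longrightarrow> set (weight_pairs A1 A2) = weight_values A1 \<times> weight_values A2"
  unfolding weight_pairs_def by (rule someI_ex) (intro finite_list finite_SigmaI finite_weight_values)

lemma finite_memories: "finite (memories A1 A2)"
  using finite_lists_length_eq[of "UNIV :: (bool \<times> bool) set"] by (simp add: memories_def)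

lemma memory_step_in_memories:
  "memory_step (weight_pairs A1 A2) (min_weight_sum A1 A2) m a b \<in> memories A1 A2"
proof -
  let ?X = "(\<lambda>k. fst (weight_pairs A1 A2 ! k) + snd (weight_pairs A1 A2 ! k)) `
      {k. k < length (weight_pairs A1 A2) \<and> monitor_fires (weight_pairs A1 A2 ! k) a b (fst m ! k)}"
  have "Max (insert (min_weight_sum A1 A2) ?X) \<in> insert (min_weight_sum A1 A2) ?X"
    by (rule Max_in) auto
  moreover have "?X \<subseteq> (\<lambda>(x, y). x + y) ` set (weight_pairs A1 A2)"
    by (auto simp: case_prod_beta)
  ultimately show ?thesis by (auto simp: memory_step_def memories_def)
qed

lemma wf_sum_pwa:
  assumes "wf_pwa A1" and "wf_pwa A2"
  shows "wf_pwa (sum_pwa A1 A2)"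
  unfolding wf_pwa_def
proof (intro conjI ballI allI)
  show "finite (states (sum_pwa A1 A2))"
    using assms finite_memories by (auto simp: sum_pwa_def wf_pwa_def intro!: finite_imageI finite_SigmaI)
  show "set_pmf (init (sum_pwa A1 A2)) \<subseteq> states (sum_pwa A1 A2)"
    using assms by (auto simp: sum_pwa_def wf_pwa_def initial_memory_def memories_def)
  fix s \<sigma> assume "s \<in> states (sum_pwa A1 A2)"
  then obtain q1 q2 m where "q1 \<in> states A1" "q2 \<in> states A2" "s = enc_state (q1, q2, m)"
    by (auto simp: sum_pwa_def)
  moreover from this have "set_pmf (trans A1 q1 \<sigma>) \<subseteq> states A1" "set_pmf (trans A2 q2 \<sigma>) \<subseteq> states A2"
    using assms by (auto simp: wf_pwa_def)
  ultimately show "set_pmf (trans (sum_pwa A1 A2) s \<sigma>) \<subseteq> states (sum_pwa A1 A2)"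
    by (auto simp: sum_pwa_def intro!: imageI memory_step_in_memories)
qed

section \<open>Limsups along runs\<close>

definition admissible_choices :: "('a::finite) pwa \<Rightarrow> (nat \<Rightarrow> 'a) \<Rightarrow> (nat \<times> nat \<Rightarrow> nat) \<Rightarrow> bool" where
  "admissible_choices B w \<omega> \<longleftrightarrow> (\<forall>j. \<omega> j \<in> set_pmf (choice_pmf B w j))"

lemma AE_admissible_choices: "AE \<omega> in choice_space B w. admissible_choices B w \<omega>"
proof -
  interpret product_prob_space "\<lambda>iq. measure_pmf (choice_pmf B w iq)" UNIV
    by unfold_locales
  have "AE \<omega> in choice_space B w. \<omega> j \<in> set_pmf (choice_pmf B w j)" for j
    unfolding choice_space_def by (rule AE_component) (simp_all add: AE_measure_pmf)
  then show ?thesis unfolding admissible_choices_def by (simp add: AE_all_countable)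
qed

lemma follow_choices_in_states:
  assumes "wf_pwa B" and "admissible_choices B w \<omega>"
  shows "follow_choices \<omega> i \<in> states B"
proof (induction i)
  case 0
  have "\<omega> (0, 0) \<in> set_pmf (choice_pmf B w (0, 0))"
    using assms(2) unfolding admissible_choices_def by blast
  then have "\<omega> (0, 0) \<in> set_pmf (init B)" by (simp add: choice_pmf_def)
  then show ?case using assms(1) by (auto simp: wf_pwa_def)
next
  case (Suc i)
  have "\<omega> (Suc i, follow_choices \<omega> i) \<in> set_pmf (choice_pmf B w (Suc i, follow_choices \<omega> i))"
    using assms(2) unfolding admissible_choices_def by blast
  then have "\<omega> (Suc i, follow_choices \<omega> i) \<in> set_pmf (trans B (follow_choices \<omega> i) (w i))"
    by (simp add: choice_pmf_def)
  then show ?case using assms(1) Suc by (auto simp: wf_pwa_def)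
qed

lemma limsup_weight_attained:
  assumes "wf_pwa B" and "admissible_choices B w \<omega>"
  obtains l where "l \<in> weight_values B"
    and "eventually (\<lambda>n. weight B (follow_choices \<omega> n) (w n) (follow_choices \<omega> (Suc n)) \<le> l) sequentially"
    and "frequently (\<lambda>n. weight B (follow_choices \<omega> n) (w n) (follow_choices \<omega> (Suc n)) = l) sequentially"
proof -
  have "weight B (follow_choices \<omega> n) (w n) (follow_choices \<omega> (Suc n)) \<in> weight_values B" for n
    by (rule weight_in_weight_values[OF follow_choices_in_states[OF assms] follow_choices_in_states[OF assms]])
  from finite_range_limsup_attained[OF finite_weight_values[OF assms(1)], where
      a="\<lambda>n. weight B (follow_choices \<omega> n) (w n) (follow_choices \<omega> (Suc n))", OF this]
  show ?thesis using that by blast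
qed

lemma LimSup_wseq_eq_of_rat:
  assumes "eventually (\<lambda>n. weight B (r n) (w n) (r (Suc n)) \<le> l) sequentially"
    and "frequently (\<lambda>n. weight B (r n) (w n) (r (Suc n)) = l) sequentially"
  shows "LimSup (wseq B w r) = ereal (of_rat l)"
proof (rule LimSup_eqI)
  show "eventually (\<lambda>n. wseq B w r n \<le> of_rat l) sequentially"
    using assms(1) by (rule eventually_mono) (simp add: wseq_def of_rat_less_eq)
  show "frequently (\<lambda>n. of_rat l \<le> wseq B w r n) sequentially"
    using assms(2) by (rule frequently_elim1) (simp add: wseq_def)
qed

lemma LimSup_sum_choice_run:
  assumes wf: "wf_pwa A1" "wf_pwa A2"
    and adm: "admissible_choices A1 w \<omega>1" "admissible_choices A2 w \<omega>2"
  shows "LimSup (wseq (sum_pwa A1 A2) w (sum_choice_run A1 A2 w (\<omega>1, \<omega>2)))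
       = LimSup (wseq A1 w (follow_choices \<omega>1)) + LimSup (wseq A2 w (follow_choices \<omega>2))"
proof -
  let ?a = "\<lambda>n. weight A1 (follow_choices \<omega>1 n) (w n) (follow_choices \<omega>1 (Suc n))"
  let ?b = "\<lambda>n. weight A2 (follow_choices \<omega>2 n) (w n) (follow_choices \<omega>2 (Suc n))"
  obtain la where la: "la \<in> weight_values A1" "eventually (\<lambda>n. ?a n \<le> la) sequentially"
      "frequently (\<lambda>n. ?a n = la) sequentially"
    using limsup_weight_attained[OF wf(1) adm(1)] by blast
  obtain lb where lb: "lb \<in> weight_values A2" "eventually (\<lambda>n. ?b n \<le> lb) sequentially"
      "frequently (\<lambda>n. ?b n = lb) sequentially"
    using limsup_weight_attained[OF wf(2) adm(2)] by blast
  define S where "S = memory_along A1 A2 w (follow_choices \<omega>1) (follow_choices \<omega>2)"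
  have S: "S (Suc n) = memory_step (weight_pairs A1 A2) (min_weight_sum A1 A2) (S n) (?a n) (?b n)" for n
    by (simp add: S_def)
  have pair: "(la, lb) \<in> set (weight_pairs A1 A2)"
    using set_weight_pairs[OF wf] la(1) lb(1) by simp
  have m0: "min_weight_sum A1 A2 \<le> la + lb"
    unfolding min_weight_sum_def using la(1) lb(1) finite_weight_values[OF wf(1)] finite_weight_values[OF wf(2)]
    by (intro add_mono Min_le)
  have freq: "frequently (\<lambda>n. la \<le> ?a n) sequentially" "frequently (\<lambda>n. lb \<le> ?b n) sequentially"
    using la(3) lb(3) by (auto elim: frequently_elim1)
  note out = memory_output_limsup[where S=S, OF S la(2) freq(1) lb(2) freq(2) pair m0]
  have "wseq (sum_pwa A1 A2) w (sum_choice_run A1 A2 w (\<omega>1, \<omega>2)) n = of_rat (snd (S (Suc n)))" for n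
    by (simp add: wseq_def sum_choice_run_def sum_run_def sum_pwa_def S_def)
  then have "LimSup (wseq (sum_pwa A1 A2) w (sum_choice_run A1 A2 w (\<omega>1, \<omega>2))) = ereal (of_rat (la + lb))"
    using out by (intro LimSup_eqI) (auto simp: of_rat_less_eq elim: eventually_mono frequently_elim1)
  then show ?thesis
    using LimSup_wseq_eq_of_rat[OF la(2,3)] LimSup_wseq_eq_of_rat[OF lb(2,3)] by (simp add: of_rat_add)
qed

section \<open>Threshold probabilities\<close>

lemma AE_pair_measure_fst_snd:
  assumes M1: "prob_space M1" and M2: "prob_space M2"
    and P: "AE x in M1. P x" and Q: "AE y in M2. Q y"
  shows "AE z in M1 \<Otimes>\<^sub>M M2. P (fst z) \<and> Q (snd z)"
proof -
  interpret M2: prob_space M2 by (rule M2)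
  interpret M1: prob_space M1 by (rule M1)
  from P obtain N1 where N1: "{x \<in> space M1. \<not> P x} \<subseteq> N1" "emeasure M1 N1 = 0" "N1 \<in> sets M1"
    by (rule AE_E)
  from Q obtain N2 where N2: "{y \<in> space M2. \<not> Q y} \<subseteq> N2" "emeasure M2 N2 = 0" "N2 \<in> sets M2"
    by (rule AE_E)
  have "N1 \<times> space M2 \<in> null_sets (M1 \<Otimes>\<^sub>M M2)" "space M1 \<times> N2 \<in> null_sets (M1 \<Otimes>\<^sub>M M2)"
    using N1 N2 by (simp_all add: null_sets_def M2.emeasure_pair_measure_Times)
  then have "N1 \<times> space M2 \<union> space M1 \<times> N2 \<in> null_sets (M1 \<Otimes>\<^sub>M M2)" by (rule null_sets.Un)
  moreover have "{z \<in> space (M1 \<Otimes>\<^sub>M M2). \<not> (P (fst z) \<and> Q (snd z))} \<subseteq> N1 \<times> space M2 \<union> space M1 \<times> N2"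
    using N1(1) N2(1) by (auto simp: space_pair_measure)
  ultimately show ?thesis by (rule AE_I')
qed

definition value_support :: "'b measure \<Rightarrow> ('b \<Rightarrow> ereal) \<Rightarrow> real set \<Rightarrow> real set" where
  "value_support M X R = {r \<in> R. 0 < measure M {x \<in> space M. X x = ereal r}}"

lemma AE_in_value_support:
  assumes "prob_space M" and [measurable]: "X \<in> borel_measurable M" and "finite R"
    and AE_R: "AE x in M. X x \<in> ereal ` R"
  shows "AE x in M. X x \<in> ereal ` value_support M X R"
proof -
  interpret prob_space M by fact
  have "AE x in M. X x \<noteq> ereal r" if "r \<in> R - value_support M X R" for r
  proof -
    have "measure M {x \<in> space M. X x = ereal r} = 0"
      using that measure_nonneg[of M "{x \<in> space M. X x = ereal r}"] by (auto simp: value_support_def)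
    then show ?thesis by (subst AE_iff_measurable[OF _ refl]) (simp_all add: emeasure_eq_measure)
  qed
  then have "AE x in M. \<forall>r\<in>R - value_support M X R. X x \<noteq> ereal r"
    using \<open>finite R\<close> by (subst AE_finite_all) auto
  with AE_R show ?thesis by eventually_elim auto
qed

lemma threshold_probability_sets:
  assumes "prob_space M" and [measurable]: "Y \<in> borel_measurable M" and "finite S"
    and AE_S: "AE x in M. Y x \<in> ereal ` S"
    and atoms: "\<And>r. r \<in> S \<Longrightarrow> 0 < measure M {x \<in> space M. Y x = ereal r}"
  shows "{\<eta>. 0 < measure M {x \<in> space M. ereal \<eta> \<le> Y x}} = {..Max S}"
    and "{\<eta>. measure M {x \<in> space M. ereal \<eta> \<le> Y x} = 1} = {..Min S}"
proof -
  interpret prob_space M by fact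
  have "S \<noteq> {}"
    using AE_S AE_False by auto
  have ge: "{x \<in> space M. ereal \<eta> \<le> Y x} \<in> sets M" for \<eta> by measurable
  have eq: "{x \<in> space M. Y x = ereal r} \<in> sets M" for r by measurable
  have "0 < measure M {x \<in> space M. ereal \<eta> \<le> Y x} \<longleftrightarrow> (\<exists>r\<in>S. \<eta> \<le> r)" for \<eta>
  proof
    assume "\<exists>r\<in>S. \<eta> \<le> r"
    then obtain r where "r \<in> S" "\<eta> \<le> r" by blast
    then have "measure M {x \<in> space M. Y x = ereal r} \<le> measure M {x \<in> space M. ereal \<eta> \<le> Y x}"
      by (intro finite_measure_mono ge) auto
    with atoms[OF \<open>r \<in> S\<close>] show "0 < measure M {x \<in> space M. ereal \<eta> \<le> Y x}" by simp
  next
    assume pos: "0 < measure M {x \<in> space M. ereal \<eta> \<le> Y x}"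
    show "\<exists>r\<in>S. \<eta> \<le> r"
    proof (rule ccontr)
      assume none: "\<not> (\<exists>r\<in>S. \<eta> \<le> r)"
      have "AE x in M. \<not> ereal \<eta> \<le> Y x"
        using AE_S by eventually_elim (use none in auto)
      then show False using pos prob_eq_0[OF ge, of \<eta>] by simp
    qed
  qed
  then show "{\<eta>. 0 < measure M {x \<in> space M. ereal \<eta> \<le> Y x}} = {..Max S}"
    by (auto simp: Max_ge_iff[OF \<open>finite S\<close> \<open>S \<noteq> {}\<close>])
  have "measure M {x \<in> space M. ereal \<eta> \<le> Y x} = 1 \<longleftrightarrow> (\<forall>r\<in>S. \<eta> \<le> r)" for \<eta>
  proof
    assume all: "\<forall>r\<in>S. \<eta> \<le> r"
    have "AE x in M. ereal \<eta> \<le> Y x"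
      using AE_S by eventually_elim (use all in auto)
    then show "measure M {x \<in> space M. ereal \<eta> \<le> Y x} = 1"
      using prob_eq_1[OF ge] by simp
  next
    assume "measure M {x \<in> space M. ereal \<eta> \<le> Y x} = 1"
    then have above: "AE x in M. ereal \<eta> \<le> Y x"
      using prob_eq_1[OF ge] by simp
    have "measure M {x \<in> space M. Y x = ereal r} = 0" if "r < \<eta>" for r
    proof -
      have "AE x in M. Y x \<noteq> ereal r"
        using above by eventually_elim (use that in auto)
      then show ?thesis using prob_eq_0[OF eq] by simp
    qed
    then show "\<forall>r\<in>S. \<eta> \<le> r"
      using atoms by (metis less_irrefl not_le)
  qed
  then show "{\<eta>. measure M {x \<in> space M. ereal \<eta> \<le> Y x} = 1} = {..Min S}"
    by (auto simp: Min_ge_iff[OF \<open>finite S\<close> \<open>S \<noteq> {}\<close>])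
qed

lemma Max_sumset:
  fixes A B :: "'a::linordered_ab_semigroup_add set"
  assumes "finite A" "A \<noteq> {}" "finite B" "B \<noteq> {}"
  shows "Max ((\<lambda>(a, b). a + b) ` (A \<times> B)) = Max A + Max B"
proof (rule Max_eqI)
  show "Max A + Max B \<in> (\<lambda>(a, b). a + b) ` (A \<times> B)"
    using assms by (intro image_eqI[where x="(Max A, Max B)"]) auto
qed (use assms in \<open>auto intro: add_mono\<close>)

lemma Min_sumset:
  fixes A B :: "'a::linordered_ab_semigroup_add set"
  assumes "finite A" "A \<noteq> {}" "finite B" "B \<noteq> {}"
  shows "Min ((\<lambda>(a, b). a + b) ` (A \<times> B)) = Min A + Min B"
proof (rule Min_eqI)
  show "Min A + Min B \<in> (\<lambda>(a, b). a + b) ` (A \<times> B)"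
    using assms by (intro image_eqI[where x="(Min A, Min B)"]) auto
qed (use assms in \<open>auto intro: add_mono\<close>)

lemma threshold_probability_sets_pair:
  assumes M1: "prob_space M1" and M2: "prob_space M2"
    and [measurable]: "X1 \<in> borel_measurable M1" "X2 \<in> borel_measurable M2"
    and S: "finite S1" "finite S2"
    and AE1: "AE x in M1. X1 x \<in> ereal ` S1" and AE2: "AE y in M2. X2 y \<in> ereal ` S2"
    and atoms1: "\<And>r. r \<in> S1 \<Longrightarrow> 0 < measure M1 {x \<in> space M1. X1 x = ereal r}"
    and atoms2: "\<And>r. r \<in> S2 \<Longrightarrow> 0 < measure M2 {y \<in> space M2. X2 y = ereal r}"
  shows "{\<eta>. 0 < measure (M1 \<Otimes>\<^sub>M M2) {z \<in> space (M1 \<Otimes>\<^sub>M M2). ereal \<eta> \<le> X1 (fst z) + X2 (snd z)}}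
      = {..Max S1 + Max S2}"
    and "{\<eta>. measure (M1 \<Otimes>\<^sub>M M2) {z \<in> space (M1 \<Otimes>\<^sub>M M2). ereal \<eta> \<le> X1 (fst z) + X2 (snd z)} = 1}
      = {..Min S1 + Min S2}"
proof -
  interpret M1: prob_space M1 by (rule M1)
  interpret M2: prob_space M2 by (rule M2)
  interpret M: prob_space "M1 \<Otimes>\<^sub>M M2" by (rule prob_space_pair[OF M1 M2])
  have nonempty: "S1 \<noteq> {}" "S2 \<noteq> {}"
    using AE1 AE2 M1.AE_False M2.AE_False by auto
  let ?S = "(\<lambda>(a, b). a + b) ` (S1 \<times> S2)"
  have AE: "AE z in M1 \<Otimes>\<^sub>M M2. X1 (fst z) + X2 (snd z) \<in> ereal ` ?S"
    using AE_pair_measure_fst_snd[OF M1 M2 AE1 AE2] by eventually_elim force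
  have atoms: "0 < measure (M1 \<Otimes>\<^sub>M M2) {z \<in> space (M1 \<Otimes>\<^sub>M M2). X1 (fst z) + X2 (snd z) = ereal r}"
    if "r \<in> ?S" for r
  proof -
    obtain r1 r2 where r: "r1 \<in> S1" "r2 \<in> S2" "r = r1 + r2" using \<open>r \<in> ?S\<close> by auto
    let ?R = "{x \<in> space M1. X1 x = ereal r1} \<times> {y \<in> space M2. X2 y = ereal r2}"
    have "measure (M1 \<Otimes>\<^sub>M M2) ?R = measure M1 {x \<in> space M1. X1 x = ereal r1} * measure M2 {y \<in> space M2. X2 y = ereal r2}"
      by (simp add: measure_def M2.emeasure_pair_measure_Times enn2real_mult)
    also have "\<dots> > 0" using atoms1[OF r(1)] atoms2[OF r(2)] by simp
    also have "measure (M1 \<Otimes>\<^sub>M M2) ?R \<le> measure (M1 \<Otimes>\<^sub>M M2) {z \<in> space (M1 \<Otimes>\<^sub>M M2). X1 (fst z) + X2 (snd z) = ereal r}"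
      using r(3) by (intro M.finite_measure_mono) (auto simp: space_pair_measure)
    finally show ?thesis .
  qed
  have "(\<lambda>z. X1 (fst z) + X2 (snd z)) \<in> borel_measurable (M1 \<Otimes>\<^sub>M M2)" by measurable
  moreover have "finite ?S" using S by simp
  ultimately have thresholds:
      "{\<eta>. 0 < measure (M1 \<Otimes>\<^sub>M M2) {z \<in> space (M1 \<Otimes>\<^sub>M M2). ereal \<eta> \<le> X1 (fst z) + X2 (snd z)}} = {..Max ?S}"
      "{\<eta>. measure (M1 \<Otimes>\<^sub>M M2) {z \<in> space (M1 \<Otimes>\<^sub>M M2). ereal \<eta> \<le> X1 (fst z) + X2 (snd z)} = 1} = {..Min ?S}"
    using threshold_probability_sets[OF prob_space_pair[OF M1 M2] _ _ AE atoms] by blast+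
  show "{\<eta>. 0 < measure (M1 \<Otimes>\<^sub>M M2) {z \<in> space (M1 \<Otimes>\<^sub>M M2). ereal \<eta> \<le> X1 (fst z) + X2 (snd z)}}
      = {..Max S1 + Max S2}"
    using thresholds(1) Max_sumset[OF S(1) nonempty(1) S(2) nonempty(2)] by simp
  show "{\<eta>. measure (M1 \<Otimes>\<^sub>M M2) {z \<in> space (M1 \<Otimes>\<^sub>M M2). ereal \<eta> \<le> X1 (fst z) + X2 (snd z)} = 1}
      = {..Min S1 + Min S2}"
    using thresholds(2) Min_sumset[OF S(1) nonempty(1) S(2) nonempty(2)] by simp
qed

definition limsup_weight :: "('a::finite) pwa \<Rightarrow> (nat \<Rightarrow> 'a) \<Rightarrow> (nat \<times> nat \<Rightarrow> nat) \<Rightarrow> ereal" where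
  "limsup_weight B w \<omega> = LimSup (wseq B w (follow_choices \<omega>))"

definition limsup_support :: "('a::finite) pwa \<Rightarrow> (nat \<Rightarrow> 'a) \<Rightarrow> real set" where
  "limsup_support B w = value_support (choice_space B w) (limsup_weight B w) (of_rat ` weight_values B)"

lemma measurable_LimSup_wseq [measurable]: "(\<lambda>r. LimSup (wseq B w r)) \<in> borel_measurable seq_space"
proof -
  have "(\<lambda>r. (\<lambda>(q, q'). ereal (of_rat (weight B q (w i) q'))) (r i, r (Suc i))) \<in> borel_measurable seq_space" for i
    by (rule measurable_compose[OF measurable_Pair_count_space[OF measurable_seq_space_coord
        measurable_seq_space_coord]]) simp
  then have "(\<lambda>r. ereal (wseq B w r i)) \<in> borel_measurable seq_space" for i
    by (simp add: wseq_def)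
  then show ?thesis unfolding LimSup_def by (rule borel_measurable_limsup)
qed

lemma measurable_limsup_weight [measurable]: "limsup_weight B w \<in> borel_measurable (choice_space B w)"
  unfolding limsup_weight_def by (rule measurable_compose[OF measurable_follow_choices measurable_LimSup_wseq])

lemma sets_ev_ge: "ev_ge B w \<eta> \<in> sets seq_space"
  unfolding ev_ge_def by measurable

lemma finite_support_limsup_weight:
  assumes "wf_pwa B"
  shows "finite (limsup_support B w)"
    and "AE \<omega> in choice_space B w. limsup_weight B w \<omega> \<in> ereal ` limsup_support B w"
    and "\<And>r. r \<in> limsup_support B w \<Longrightarrow> 0 < measure (choice_space B w) {\<omega> \<in> space (choice_space B w). limsup_weight B w \<omega> = ereal r}"
proof -
  have "AE \<omega> in choice_space B w. limsup_weight B w \<omega> \<in> ereal ` of_rat ` weight_values B"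
    using AE_admissible_choices
  proof (rule eventually_mono)
    fix \<omega> assume "admissible_choices B w \<omega>"
    from limsup_weight_attained[OF assms this] obtain l where l: "l \<in> weight_values B"
      "eventually (\<lambda>n. weight B (follow_choices \<omega> n) (w n) (follow_choices \<omega> (Suc n)) \<le> l) sequentially"
      "frequently (\<lambda>n. weight B (follow_choices \<omega> n) (w n) (follow_choices \<omega> (Suc n)) = l) sequentially" .
    then show "limsup_weight B w \<omega> \<in> ereal ` of_rat ` weight_values B"
      unfolding limsup_weight_def LimSup_wseq_eq_of_rat[OF l(2,3)] by blast
  qed
  then show "AE \<omega> in choice_space B w. limsup_weight B w \<omega> \<in> ereal ` limsup_support B w"
    unfolding limsup_support_def
    by (intro AE_in_value_support prob_space_choice_space measurable_limsup_weight
        finite_imageI finite_weight_values assms)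
  show "finite (limsup_support B w)"
    using finite_weight_values[OF assms] by (simp add: limsup_support_def value_support_def)
  show "\<And>r. r \<in> limsup_support B w \<Longrightarrow> 0 < measure (choice_space B w) {\<omega> \<in> space (choice_space B w). limsup_weight B w \<omega> = ereal r}"
    by (simp add: limsup_support_def value_support_def)
qed

lemma measure_ev_ge:
  "measure (run_measure B w) (ev_ge B w \<eta>) = measure (choice_space B w) {\<omega>. ereal \<eta> \<le> limsup_weight B w \<omega>}"
  unfolding run_measure_eq_distr_follow_choices measure_distr[OF measurable_follow_choices sets_ev_ge]
  by (simp add: ev_ge_def limsup_weight_def vimage_def)

lemma measure_ev_ge_sum_pwa:
  assumes "wf_pwa A1" and "wf_pwa A2"
  shows "measure (run_measure (sum_pwa A1 A2) w) (ev_ge (sum_pwa A1 A2) w \<eta>) =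
    measure (choice_space A1 w \<Otimes>\<^sub>M choice_space A2 w)
      {z \<in> space (choice_space A1 w \<Otimes>\<^sub>M choice_space A2 w). ereal \<eta> \<le> limsup_weight A1 w (fst z) + limsup_weight A2 w (snd z)}"
  unfolding run_measure_sum_pwa measure_distr[OF measurable_sum_choice_run sets_ev_ge]
proof (rule measure_eq_AE)
  show "AE z in choice_space A1 w \<Otimes>\<^sub>M choice_space A2 w.
      (z \<in> sum_choice_run A1 A2 w -` ev_ge (sum_pwa A1 A2) w \<eta> \<inter> space (choice_space A1 w \<Otimes>\<^sub>M choice_space A2 w)) \<longleftrightarrow>
      (z \<in> {z \<in> space (choice_space A1 w \<Otimes>\<^sub>M choice_space A2 w). ereal \<eta> \<le> limsup_weight A1 w (fst z) + limsup_weight A2 w (snd z)})"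
    using AE_pair_measure_fst_snd[OF prob_space_choice_space prob_space_choice_space AE_admissible_choices AE_admissible_choices]
  proof eventually_elim
    case (elim z)
    then show ?case
      using LimSup_sum_choice_run[OF assms, of w "fst z" "snd z"]
      by (auto simp: ev_ge_def limsup_weight_def)
  qed
qed (simp_all add: measurable_sets[OF measurable_sum_choice_run sets_ev_ge])

lemma L_pos_L_as_eq:
  assumes "wf_pwa B"
  shows "L_pos B w = Max (limsup_support B w)" and "L_as B w = Min (limsup_support B w)"
  using threshold_probability_sets[OF prob_space_choice_space measurable_limsup_weight
      finite_support_limsup_weight[OF assms]]
  by (simp_all add: L_pos_def L_as_def measure_ev_ge)

lemma L_pos_L_as_sum_pwa:
  assumes "wf_pwa A1" and "wf_pwa A2"
  shows "L_pos (sum_pwa A1 A2) w = Max (limsup_support A1 w) + Max (limsup_support A2 w)"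
    and "L_as (sum_pwa A1 A2) w = Min (limsup_support A1 w) + Min (limsup_support A2 w)"
  using threshold_probability_sets_pair[OF prob_space_choice_space prob_space_choice_space
      measurable_limsup_weight measurable_limsup_weight
      finite_support_limsup_weight(1)[OF assms(1)] finite_support_limsup_weight(1)[OF assms(2)]
      finite_support_limsup_weight(2)[OF assms(1)] finite_support_limsup_weight(2)[OF assms(2)]
      finite_support_limsup_weight(3)[OF assms(1)] finite_support_limsup_weight(3)[OF assms(2)]]
  by (simp_all add: L_pos_def L_as_def measure_ev_ge_sum_pwa[OF assms])

theorem lemma24:
  fixes A1 A2 :: "('a::finite) pwa"
  assumes "wf_pwa A1" and "wf_pwa A2"
  shows "(\<exists>A. wf_pwa A \<and> (\<forall>w. L_pos A w = L_pos A1 w + L_pos A2 w)) \<and>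
         (\<exists>A. wf_pwa A \<and> (\<forall>w. L_as A w = L_as A1 w + L_as A2 w))"
  using wf_sum_pwa[OF assms] L_pos_L_as_sum_pwa[OF assms] L_pos_L_as_eq[OF assms(1)] L_pos_L_as_eq[OF assms(2)]
  by auto

end
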